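(* For every $p\in(0,1/2]$ and $\delta,\nu\in(0,1]$ there are $K=K(p,\delta,\nu)>0$ and $L_1=L_1(p,\delta,\nu)\geq1$ with the following property. Let $n\geq2$, $L\geq L_1$, and $x\in\mathrm{Incomp}_n(\delta,\nu)$. Then $\mathcal T_p(x,L)\leq K/\sqrt n$.
   Context: For $\delta,\nu\in(0,1]$, $\mathrm{Comp}_n(\delta,\nu)$ is the set of unit vectors $x\in\mathbb{R}^n$ for which there exists $y\in\mathbb{R}^n$ with at most $\delta n$ nonzero coordinates and $\|x-y\|_2\leq\nu$, and $\mathrm{Incomp}_n(\delta,\nu)=S^{n-1}\setminus\mathrm{Comp}_n(\delta,\nu)$. The Lévy concentration function is $\mathcal L(\xi,t)=\sup_{\lambda\in\mathbb{R}}\mathbb{P}\{|\xi-\lambda|\leq t\}$. For $p\in(0,1/2]$, $x\in S^{n-1}$ and $L>0$, the threshold $\mathcal T_p(x,L)$ is the supremum of all $t\in(0,1]$ such that $\mathcal L(\sum_{i=1}^n b_ix_i,t)>Lt$, where $b_1,\dots,b_n$ are independent Bernoulli($p$) random variables (taking value $1$ with probability $p$ and $0$ otherwise). *)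

theory Defs
  imports "HOL-Probability.Probability"
begin

text \<open>Vectors in R^n are represented as functions nat => real supported on {..<n}.\<close>

definition unit_sphere :: "nat \<Rightarrow> (nat \<Rightarrow> real) set" where
  "unit_sphere n = {x. (\<forall>i\<ge>n. x i = 0) \<and> (\<Sum>i<n. (x i)\<^sup>2) = 1}"

definition Comp :: "nat \<Rightarrow> real \<Rightarrow> real \<Rightarrow> (nat \<Rightarrow> real) set" where
  "Comp n \<delta> \<nu> = {x \<in> unit_sphere n. \<exists>y::nat \<Rightarrow> real. (\<forall>i\<ge>n. y i = 0) \<and>
       real (card {i\<in>{..<n}. y i \<noteq> 0}) \<le> \<delta> * real n \<and>
       sqrt (\<Sum>i<n. (x i - y i)\<^sup>2) \<le> \<nu>}"

definition Incomp :: "nat \<Rightarrow> real \<Rightarrow> real \<Rightarrow> (nat \<Rightarrow> real) set" where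
  "Incomp n \<delta> \<nu> = unit_sphere n - Comp n \<delta> \<nu>"

definition levy_conc :: "real pmf \<Rightarrow> real \<Rightarrow> real" where
  "levy_conc M t = (SUP c::real. measure_pmf.prob M {y. \<bar>y - c\<bar> \<le> t})"

definition bern_sum :: "real \<Rightarrow> nat \<Rightarrow> (nat \<Rightarrow> real) \<Rightarrow> real pmf" where
  "bern_sum p n x = map_pmf (\<lambda>b. \<Sum>i<n. (if b i then 1 else 0) * x i)
      (Pi_pmf {..<n} False (\<lambda>_. bernoulli_pmf p))"

definition threshold :: "real \<Rightarrow> nat \<Rightarrow> (nat \<Rightarrow> real) \<Rightarrow> real \<Rightarrow> real" where
  "threshold p n x L = Sup {t. 0 < t \<and> t \<le> 1 \<and> levy_conc (bern_sum p n x) t > L * t}"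

end

theory Submission
  imports Defs
begin

text \<open>
  An incompressible unit vector x has more than \<delta>n coordinates with |x_i| \<ge> r = \<nu>/sqrt n, hence a
  set S of m > \<delta>n/2 such coordinates of one sign. Conditioning on the Bernoulli variables outside
  S, it suffices to bound P(|u + \<Sum>_{i\<in>S} b_i x_i| \<le> t) uniformly in u. As
  p^|A| (1-p)^(m-|A|) = P(Bin(m, p) = |A|) |A|! (m-|A|)! / m!, this probability is at most
  max_k P(Bin(m, p) = k) \<le> 1/sqrt((m + 1)p) times the average number of members A of a maximal
  chain of subsets of S with |u + \<Sum>_{i\<in>A} x_i| \<le> t. Along a chain the partial sums increase by
  at least r, so at most 2t/r + 1 members hit an interval of length 2t. Hence every ball of
  radius t has probability at most sqrt(2/(p\<delta>)) (2t/\<nu> + 1/sqrt n), which is at most L t once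
  t > 1/sqrt n and L is large, so T_p(x, L) \<le> 1/sqrt n.
\<close>

section \<open>Binomial point masses\<close>

lemma Suc_times_central_binomial_odd:
  "Suc n * (Suc (2*n) choose n) = Suc (2*n) * ((2*n) choose n)"
  using Suc_times_binomial[of n "2*n"] central_binomial_odd[of "Suc (2*n)"] by simp

lemma central_binomial_Suc: "(2 * Suc n) choose Suc n = 2 * (Suc (2*n) choose n)"
proof -
  have "2 * Suc n = Suc (Suc (2*n))" by simp
  then have "Suc n * ((2 * Suc n) choose Suc n) = Suc (Suc (2*n)) * (Suc (2*n) choose n)"
    by (simp only: Suc_times_binomial)
  also have "\<dots> = Suc n * (2 * (Suc (2*n) choose n))" by simp
  finally show ?thesis by (rule mult_left_cancel[THEN iffD1, rotated]) simp
qed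

lemma central_binomial_sq_bound: "(real ((2*n) choose n) / 4^n)^2 * (3 * real n + 1) \<le> 1"
proof (induction n)
  case 0
  show ?case by simp
next
  case (Suc n)
  define a where "a = real ((2 * Suc n) choose Suc n)"
  define b where "b = real ((2*n) choose n)"
  define c where "c = b / 4^n"
  define c' where "c' = a / 4^Suc n"
  have "Suc n * ((2 * Suc n) choose Suc n) = 2 * (Suc (2*n) * ((2*n) choose n))"
    unfolding central_binomial_Suc Suc_times_central_binomial_odd[symmetric] by (rule mult.left_commute)
  then have "(real n + 1) * a = 2 * ((2 * real n + 1) * b)"
    unfolding a_def b_def by (metis of_nat_mult of_nat_numeral of_nat_Suc add.commute mult_2)
  then have "2 * 4^n * ((real n + 1) * a) = 2 * 4^n * (2 * ((2 * real n + 1) * b))"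
    by (rule arg_cong)
  then have ratio: "(2 * real n + 2) * c' = (2 * real n + 1) * c"
    unfolding c_def c'_def by (simp add: field_simps)
  have "(2 * real n + 2)^2 * (c'^2 * (3 * real (Suc n) + 1)) = ((2 * real n + 2) * c')^2 * (3 * real n + 4)"
    by (simp add: power2_eq_square algebra_simps)
  also have "\<dots> = c^2 * ((2 * real n + 1)^2 * (3 * real n + 4))"
    unfolding ratio by (simp add: power_mult_distrib)
  also have "\<dots> \<le> c^2 * ((3 * real n + 1) * (2 * real n + 2)^2)"
    by (intro mult_left_mono) (simp_all add: power2_eq_square algebra_simps)
  also have "\<dots> \<le> (2 * real n + 2)^2 * 1"
    using Suc.IH unfolding c_def b_def by (simp add: mult_ac mult_right_mono)
  finally show ?case
    unfolding c'_def a_def by (rule mult_left_le_imp_le) simp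
qed

lemma binomial_div_two_power_sq_bound: "(real (j choose k) / 2^j)^2 * (real j + 1) \<le> 2"
proof -
  define n where "n = j div 2"
  define c where "c = real ((2*n) choose n) / 4^n"
  have j: "j = 2*n \<or> j = Suc (2*n)" unfolding n_def by arith
  have "real (j choose k) / 2^j \<le> c"
  proof (cases "j = 2*n")
    case True
    then have "j choose k \<le> (2*n) choose n" using binomial_maximum'[of n k] by simp
    moreover have "(2::real)^j = 4^n" using True by (simp add: power_mult)
    ultimately show ?thesis unfolding c_def by (simp add: divide_right_mono)
  next
    case False
    then have odd_j: "j = Suc (2*n)" using j by simp
    have "Suc n * (j choose n) \<le> Suc n * (2 * ((2*n) choose n))"
      using Suc_times_central_binomial_odd[of n] mult_le_mono1[of "Suc (2*n)" "Suc n * 2" "(2*n) choose n"]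
      unfolding odd_j by (simp add: mult.assoc)
    then have "j choose n \<le> 2 * ((2*n) choose n)" by (simp only: mult_le_cancel1)
    then have "j choose k \<le> 2 * ((2*n) choose n)" by (metis binomial_maximum le_trans n_def)
    then have "real (j choose k) \<le> 2 * real ((2*n) choose n)" by (metis of_nat_le_iff of_nat_mult of_nat_numeral)
    moreover have "(2::real)^j = 2 * 4^n" using odd_j by (simp add: power_mult)
    ultimately show ?thesis unfolding c_def by (simp add: field_simps)
  qed
  then have "(real (j choose k) / 2^j)^2 \<le> c^2" by (rule power_mono) simp
  moreover have "real j + 1 \<le> 2 * (3 * real n + 1)" using j by auto
  ultimately have "(real (j choose k) / 2^j)^2 * (real j + 1) \<le> c^2 * (2 * (3 * real n + 1))"
    by (rule mult_mono) simp_all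
  also have "\<dots> = 2 * (c^2 * (3 * real n + 1))" by (rule mult.left_commute)
  also have "\<dots> \<le> 2" using central_binomial_sq_bound[of n] unfolding c_def by simp
  finally show ?thesis .
qed

text \<open>Unlike \<open>pmf (binomial_pmf m q) k\<close>, this polynomial in q needs no side condition
  \<open>0 \<le> q \<le> 1\<close>.\<close>
definition binom_prob :: "nat \<Rightarrow> real \<Rightarrow> nat \<Rightarrow> real" where
  "binom_prob m q k = real (m choose k) * q^k * (1-q)^(m-k)"

lemma binom_prob_nonneg: "0 \<le> q \<Longrightarrow> q \<le> 1 \<Longrightarrow> 0 \<le> binom_prob m q k"
  unfolding binom_prob_def by simp

lemma sum_binom_prob: "(\<Sum>k\<le>m. binom_prob m q k) = 1"
  using binomial_ring[of q "1-q" m] unfolding binom_prob_def by simp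

lemma binom_prob_thinning:
  "binom_prob m p k = (\<Sum>j\<le>m. binom_prob m (2*p) j * (real (j choose k) / 2^j))"
proof (cases "k \<le> m")
  case False
  have "(\<Sum>j\<le>m. binom_prob m (2*p) j * (real (j choose k) / 2^j)) = 0"
    using False by (intro sum.neutral) (simp add: binom_prob_def)
  moreover have "binom_prob m p k = 0" using False by (simp add: binom_prob_def)
  ultimately show ?thesis by simp
next
  case True
  have summand: "binom_prob m (2*p) j * (real (j choose k) / 2^j)
        = real (m choose k) * (real ((m-k) choose (j-k)) * p^j * (1-2*p)^(m-j))"
    if "j \<in> {k..m}" for j
  proof -
    have "real (m choose j) * real (j choose k) = real (m choose k) * real ((m-k) choose (j-k))"
      using choose_mult[of k j m] that unfolding of_nat_mult[symmetric] by simp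
    moreover have "(2*p)^j / 2^j = p^j" by (simp add: power_mult_distrib)
    ultimately show ?thesis unfolding binom_prob_def by (simp add: ac_simps)
  qed
  have "(\<Sum>j\<le>m. binom_prob m (2*p) j * (real (j choose k) / 2^j))
      = (\<Sum>j\<in>{k..m}. binom_prob m (2*p) j * (real (j choose k) / 2^j))"
    by (rule sum.mono_neutral_right) auto
  also have "\<dots> = real (m choose k) * (\<Sum>j\<in>{k..m}. real ((m-k) choose (j-k)) * p^j * (1-2*p)^(m-j))"
    by (subst sum_distrib_left) (rule sum.cong[OF refl summand])
  also have "(\<Sum>j\<in>{k..m}. real ((m-k) choose (j-k)) * p^j * (1-2*p)^(m-j))
      = (\<Sum>i\<le>m-k. real ((m-k) choose i) * p^(i+k) * (1-2*p)^((m-k)-i))"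
  proof -
    have "{k..m} = {0 + k..(m - k) + k}" using True by simp
    then show ?thesis
      unfolding atLeast0AtMost[symmetric] by (simp only: sum.shift_bounds_cl_nat_ivl)
        (intro sum.cong refl; simp add: diff_diff_left add.commute)
  qed
  also have "\<dots> = p^k * (\<Sum>i\<le>m-k. real ((m-k) choose i) * p^i * (1-2*p)^((m-k)-i))"
    by (simp add: sum_distrib_left power_add ac_simps)
  also have "(\<Sum>i\<le>m-k. real ((m-k) choose i) * p^i * (1-2*p)^((m-k)-i)) = (p + (1-2*p))^(m-k)"
    by (rule binomial_ring[symmetric])
  finally show ?thesis unfolding binom_prob_def by (simp add: ac_simps)
qed

lemma sum_binom_prob_div_Suc:
  assumes "0 < q" "q \<le> 1"
  shows "(\<Sum>j\<le>m. binom_prob m q j / (real j + 1)) \<le> 1 / ((real m + 1) * q)"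
proof -
  have shift: "binom_prob m q j / (real j + 1) = binom_prob (Suc m) q (Suc j) / ((real m + 1) * q)"
    for j
  proof -
    have "real (Suc j) * real (Suc m choose Suc j) = real (Suc m) * real (m choose j)"
      using Suc_times_binomial[of j m] unfolding of_nat_mult[symmetric] by (simp only:)
    then have "real (Suc m choose Suc j) / (real m + 1) = real (m choose j) / (real j + 1)"
      by (simp del: binomial_Suc_Suc add: field_simps)
    moreover have "binom_prob (Suc m) q (Suc j)
        = ((real m + 1) * q) * (real (Suc m choose Suc j) / (real m + 1) * (q^j * (1-q)^(m-j)))"
      unfolding binom_prob_def by (simp del: binomial_Suc_Suc add: ac_simps)
    ultimately show ?thesis
      using assms unfolding binom_prob_def by simp
  qed
  have "(\<Sum>j\<le>m. binom_prob (Suc m) q (Suc j)) \<le> (\<Sum>j\<le>Suc m. binom_prob (Suc m) q j)"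
    unfolding sum.atMost_Suc_shift using assms by (simp add: binom_prob_nonneg)
  then have "(\<Sum>j\<le>m. binom_prob (Suc m) q (Suc j)) \<le> 1"
    by (simp only: sum_binom_prob)
  then show ?thesis
    using assms by (simp add: shift sum_divide_distrib[symmetric] divide_right_mono)
qed

lemma weighted_Cauchy_Schwarz:
  fixes w h :: "'a \<Rightarrow> real"
  assumes "\<And>i. i \<in> I \<Longrightarrow> 0 \<le> w i"
  shows "(\<Sum>i\<in>I. w i * h i)^2 \<le> (\<Sum>i\<in>I. w i) * (\<Sum>i\<in>I. w i * (h i)^2)"
proof -
  have "(\<Sum>i\<in>I. sqrt (w i) * (sqrt (w i) * h i))^2
      \<le> (\<Sum>i\<in>I. (sqrt (w i))^2) * (\<Sum>i\<in>I. (sqrt (w i) * h i)^2)"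
    by (rule Cauchy_Schwarz_ineq_sum)
  moreover have "(\<Sum>i\<in>I. sqrt (w i) * (sqrt (w i) * h i)) = (\<Sum>i\<in>I. w i * h i)"
    using assms by (intro sum.cong refl) (simp add: mult.assoc[symmetric])
  moreover have "(\<Sum>i\<in>I. (sqrt (w i))^2) = (\<Sum>i\<in>I. w i)"
    using assms by (intro sum.cong refl) simp
  moreover have "(\<Sum>i\<in>I. (sqrt (w i) * h i)^2) = (\<Sum>i\<in>I. w i * (h i)^2)"
    using assms by (intro sum.cong refl) (simp add: power_mult_distrib)
  ultimately show ?thesis by simp
qed

text \<open>Writing Bin(m, p) as the thinning of Bin(m, 2p) by fair coins reduces the bound on its
  point masses, via Cauchy-Schwarz, to the central binomial estimate and to E[1/(J+1)].\<close>
lemma binom_prob_sq_le: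
  assumes "0 < p" "p \<le> 1/2"
  shows "(binom_prob m p k)^2 \<le> 1 / ((real m + 1) * p)"
proof -
  define w where "w j = binom_prob m (2*p) j" for j
  define h where "h j = real (j choose k) / 2^j" for j
  have w_nonneg: "0 \<le> w j" for j unfolding w_def using assms by (intro binom_prob_nonneg) auto
  have "(binom_prob m p k)^2 = (\<Sum>j\<le>m. w j * h j)^2"
    unfolding w_def h_def binom_prob_thinning[of m p k] ..
  also have "\<dots> \<le> (\<Sum>j\<le>m. w j) * (\<Sum>j\<le>m. w j * (h j)^2)"
    using w_nonneg by (rule weighted_Cauchy_Schwarz)
  also have "\<dots> = (\<Sum>j\<le>m. w j * (h j)^2)"
    unfolding w_def sum_binom_prob by simp
  also have "\<dots> \<le> (\<Sum>j\<le>m. w j * (2 / (real j + 1)))"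
  proof (intro sum_mono mult_left_mono w_nonneg)
    fix j
    show "(h j)^2 \<le> 2 / (real j + 1)"
      using binomial_div_two_power_sq_bound[of j k] unfolding h_def by (simp add: field_simps)
  qed
  also have "\<dots> = 2 * (\<Sum>j\<le>m. w j / (real j + 1))"
    by (subst sum_distrib_left) (intro sum.cong refl; simp)
  also have "\<dots> \<le> 2 * (1 / ((real m + 1) * (2*p)))"
    unfolding w_def using assms by (intro mult_left_mono sum_binom_prob_div_Suc) auto
  finally show ?thesis by simp
qed

section \<open>Maximal chains of subsets\<close>

text \<open>An upper bound for the number of points of a sequence starting at u with increments
  at least r that lie in [-t, t].\<close>
definition hit_bound :: "real \<Rightarrow> real \<Rightarrow> real \<Rightarrow> real" where
  "hit_bound r t u = (if u > t then 0 else (t - max u (-t)) / r + 1)"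

lemma hit_bound_nonneg: "0 < r \<Longrightarrow> 0 \<le> t \<Longrightarrow> 0 \<le> hit_bound r t u"
  unfolding hit_bound_def by (auto simp: field_simps)

lemma hit_bound_le: "0 < r \<Longrightarrow> 0 \<le> t \<Longrightarrow> hit_bound r t u \<le> 2 * t / r + 1"
  unfolding hit_bound_def by (auto simp: divide_right_mono)

lemma hit_bound_step:
  assumes "0 < r" "0 \<le> t" "r \<le> y"
  shows "hit_bound r t (u + y) + (if \<bar>u\<bar> \<le> t then 1 else 0) \<le> hit_bound r t u"
proof -
  consider "t < u" | "\<bar>u\<bar> \<le> t" "t < u + y" | "\<bar>u\<bar> \<le> t" "u + y \<le> t" | "u < -t"
    by linarith
  then show ?thesis
  proof cases
    case 3
    have "(t - (u + y)) / r \<le> (t - u - r) / r" using assms by (intro divide_right_mono) auto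
    also have "\<dots> = (t - u) / r - 1" using assms by (simp add: field_simps)
    finally show ?thesis using 3 assms unfolding hit_bound_def by auto
  next
    case 4
    then show ?thesis
      using assms hit_bound_le[OF assms(1,2), of "u + y"] unfolding hit_bound_def by auto
  qed (use assms in \<open>auto simp: hit_bound_def\<close>)
qed

lemma sum_Pow_sum_member:
  assumes "finite S"
  shows "(\<Sum>A\<in>Pow S. \<Sum>a\<in>A. f a A) = (\<Sum>a\<in>S. \<Sum>B\<in>Pow (S - {a}). f a (insert a B))"
proof -
  have "(\<Sum>A\<in>Pow S. \<Sum>a\<in>A. f a A) = (\<Sum>(A, a)\<in>(SIGMA A:Pow S. A). f a A)"
    using assms by (subst sum.Sigma) (auto intro: rev_finite_subset)
  also have "\<dots> = (\<Sum>(a, B)\<in>Sigma S (\<lambda>a. Pow (S - {a})). f a (insert a B))"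
    by (rule sum.reindex_bij_witness[where i="\<lambda>(a, B). (insert a B, a)" and j="\<lambda>(A, a). (a, A - {a})"])
      (auto simp: insert_absorb)
  also have "\<dots> = (\<Sum>a\<in>S. \<Sum>B\<in>Pow (S - {a}). f a (insert a B))"
    using assms by (subst sum.Sigma) auto
  finally show ?thesis .
qed

text \<open>There are |A|! (|S| - |A|)! maximal chains of subsets of S through A, so
  \<open>chain_hits x t S u\<close> counts the pairs of a maximal chain and a member A of it with
  \<open>\<bar>u + sum x A\<bar> \<le> t\<close>.\<close>
definition chain_hits :: "(nat \<Rightarrow> real) \<Rightarrow> real \<Rightarrow> nat set \<Rightarrow> real \<Rightarrow> real" where
  "chain_hits x t S u = (\<Sum>A\<in>Pow S.
     if \<bar>u + sum x A\<bar> \<le> t then fact (card A) * fact (card S - card A) else 0)"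

lemma chain_hits_empty: "chain_hits x t {} u = (if \<bar>u\<bar> \<le> t then 1 else 0)"
  unfolding chain_hits_def by simp

lemma fact_mult_fact_eq_sum:
  assumes "finite A" "A \<noteq> {}" "card A \<le> m"
  shows "(fact (card A) * fact (m - card A) :: real)
       = (\<Sum>a\<in>A. fact (card (A - {a})) * fact (m - 1 - card (A - {a})))"
proof -
  have "0 < card A" using assms by (simp add: card_gt_0_iff)
  then have "(\<Sum>a\<in>A. fact (card (A - {a})) * fact (m - 1 - card (A - {a})) :: real)
      = real (card A) * (fact (card A - 1) * fact (m - card A))"
    using assms by simp
  also have "\<dots> = fact (card A) * fact (m - card A)"
    using assms by (simp add: fact_reduce[of "card A"] card_gt_0_iff)
  finally show ?thesis ..
qed

lemma chain_hits_remove: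
  assumes "finite S" "S \<noteq> {}"
  shows "chain_hits x t S u
       = (if \<bar>u\<bar> \<le> t then fact (card S) else 0) + (\<Sum>a\<in>S. chain_hits x t (S - {a}) (u + x a))"
proof -
  define m where "m = card S"
  define w where "w A = (if \<bar>u + sum x A\<bar> \<le> t then 1 else 0 :: real)" for A
  have finite_sub: "finite A" if "A \<in> Pow S" for A
    using that assms(1) by (auto intro: rev_finite_subset)
  have "chain_hits x t S u = (\<Sum>A\<in>Pow S. w A * (fact (card A) * fact (m - card A)))"
    unfolding chain_hits_def w_def m_def by (intro sum.cong) auto
  also have "\<dots> = w {} * fact m + (\<Sum>A\<in>Pow S - {{}}. w A * (fact (card A) * fact (m - card A)))"
    using assms by (subst sum.remove[of _ "{}"]) auto
  also have "(\<Sum>A\<in>Pow S - {{}}. w A * (fact (card A) * fact (m - card A)))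
      = (\<Sum>A\<in>Pow S. \<Sum>a\<in>A. w A * (fact (card (A - {a})) * fact (m - 1 - card (A - {a}))))"
  proof -
    have "card A \<le> m" if "A \<in> Pow S" for A
      using that assms(1) unfolding m_def by (simp add: card_mono)
    then have "(\<Sum>A\<in>Pow S - {{}}. w A * (fact (card A) * fact (m - card A)))
        = (\<Sum>A\<in>Pow S - {{}}. \<Sum>a\<in>A. w A * (fact (card (A - {a})) * fact (m - 1 - card (A - {a}))))"
      using finite_sub by (intro sum.cong) (auto simp: fact_mult_fact_eq_sum sum_distrib_left)
    also have "\<dots> = (\<Sum>A\<in>Pow S. \<Sum>a\<in>A. w A * (fact (card (A - {a})) * fact (m - 1 - card (A - {a}))))"
      using assms by (intro sum.mono_neutral_left) auto
    finally show ?thesis .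
  qed
  also have "\<dots> = (\<Sum>a\<in>S. \<Sum>B\<in>Pow (S - {a}).
      w (insert a B) * (fact (card (insert a B - {a})) * fact (m - 1 - card (insert a B - {a}))))"
    using assms(1) by (rule sum_Pow_sum_member)
  also have "\<dots> = (\<Sum>a\<in>S. chain_hits x t (S - {a}) (u + x a))"
    unfolding chain_hits_def
  proof (intro sum.cong refl)
    fix a B assume a: "a \<in> S" and B: "B \<in> Pow (S - {a})"
    then have "a \<notin> B" "finite B" using assms(1) by (auto intro: rev_finite_subset)
    then have "insert a B - {a} = B" "sum x (insert a B) = x a + sum x B" by auto
    moreover have "card (S - {a}) = m - 1" using a assms(1) unfolding m_def by simp
    ultimately show "w (insert a B) * (fact (card (insert a B - {a})) * fact (m - 1 - card (insert a B - {a})))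
      = (if \<bar>u + x a + sum x B\<bar> \<le> t then fact (card B) * fact (card (S - {a}) - card B) else 0)"
      unfolding w_def by (simp add: ac_simps)
  qed
  finally show ?thesis unfolding w_def m_def by simp
qed

lemma chain_hits_le:
  assumes "0 < r" "0 \<le> t" "finite S" "\<forall>i\<in>S. r \<le> x i"
  shows "chain_hits x t S u \<le> fact (card S) * hit_bound r t u"
  using assms(3,4)
proof (induction S arbitrary: u rule: finite_psubset_induct)
  case (psubset S)
  show ?case
  proof (cases "S = {}")
    case True
    then show ?thesis
      using hit_bound_step[OF assms(1,2) order.refl, of u] hit_bound_nonneg[OF assms(1,2), of "u + r"]
      by (simp add: chain_hits_empty)
  next
    case False
    define m where "m = card S"
    define e where "e = (if \<bar>u\<bar> \<le> t then 1 else 0 :: real)"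
    have "chain_hits x t (S - {a}) (u + x a) \<le> fact (m - 1) * (hit_bound r t u - e)"
      if "a \<in> S" for a
    proof -
      have "card (S - {a}) = m - 1" "S - {a} \<subset> S"
        using that psubset.hyps(1) unfolding m_def by auto
      then have "chain_hits x t (S - {a}) (u + x a) \<le> fact (m - 1) * hit_bound r t (u + x a)"
        using psubset.IH[of "S - {a}" "u + x a"] psubset.prems by auto
      also have "\<dots> \<le> fact (m - 1) * (hit_bound r t u - e)"
        using hit_bound_step[OF assms(1,2), of "x a" u] psubset.prems that unfolding e_def
        by (intro mult_left_mono) auto
      finally show ?thesis .
    qed
    then have "(\<Sum>a\<in>S. chain_hits x t (S - {a}) (u + x a)) \<le> (\<Sum>a\<in>S. fact (m - 1) * (hit_bound r t u - e))"
      by (rule sum_mono)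
    moreover have "chain_hits x t S u = e * fact m + (\<Sum>a\<in>S. chain_hits x t (S - {a}) (u + x a))"
      unfolding chain_hits_remove[OF psubset.hyps(1) False] m_def e_def by simp
    ultimately have "chain_hits x t S u \<le> e * fact m + real m * (fact (m - 1) * (hit_bound r t u - e))"
      unfolding m_def by simp
    also have "\<dots> = fact m * hit_bound r t u"
    proof -
      have "(fact m :: real) = real m * fact (m - 1)"
        using False psubset.hyps(1) unfolding m_def by (simp add: fact_reduce card_gt_0_iff)
      then show ?thesis by (simp add: algebra_simps)
    qed
    finally show ?thesis unfolding m_def .
  qed
qed

section \<open>Sums of Bernoulli-selected coordinates\<close>

definition subset_prob :: "real \<Rightarrow> nat set \<Rightarrow> nat set \<Rightarrow> real" where
  "subset_prob p U A = p ^ card A * (1 - p) ^ (card U - card A)"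

lemma subset_prob_nonneg: "0 \<le> p \<Longrightarrow> p \<le> 1 \<Longrightarrow> 0 \<le> subset_prob p U A"
  unfolding subset_prob_def by simp

lemma sum_subset_prob:
  assumes "finite U"
  shows "(\<Sum>A\<in>Pow U. subset_prob p U A) = 1"
proof -
  have "(\<Sum>A\<in>Pow U. subset_prob p U A) = (\<Sum>A\<in>Pow U. (\<Prod>i\<in>A. p) * (\<Prod>i\<in>U - A. 1 - p))"
    using assms by (intro sum.cong refl) (auto simp: subset_prob_def card_Diff_subset finite_subset)
  also have "\<dots> = (\<Prod>i\<in>U. p + (1 - p))"
    by (rule prod_add[OF assms, symmetric])
  finally show ?thesis by simp
qed

lemma subset_prob_union:
  assumes "finite U" "S \<subseteq> U" "A \<subseteq> S" "B \<subseteq> U - S"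
  shows "subset_prob p U (A \<union> B) = subset_prob p (U - S) B * subset_prob p S A"
proof -
  have finite: "finite S" "finite A" "finite B"
    using assms by (auto intro: finite_subset)
  have "A \<inter> B = {}" using assms by auto
  then have "card (A \<union> B) = card A + card B"
    using finite by (simp add: card_Un_disjoint)
  moreover have "card U = card S + card (U - S)"
    using assms finite by (simp add: card_Diff_subset card_mono)
  moreover have "card A \<le> card S" "card B \<le> card (U - S)"
    using assms finite by (simp_all add: card_mono)
  ultimately have "card U - card (A \<union> B) = (card S - card A) + (card (U - S) - card B)"
    by simp
  then show ?thesis
    unfolding subset_prob_def \<open>card (A \<union> B) = card A + card B\<close> by (simp add: power_add ac_simps)
qed

lemma sum_subset_prob_split:
  assumes "finite U" "S \<subseteq> U"
  shows "(\<Sum>C\<in>Pow U. if sum x C \<in> E then subset_prob p U C else 0)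
       = (\<Sum>B\<in>Pow (U - S). subset_prob p (U - S) B *
            (\<Sum>A\<in>Pow S. if sum x A + sum x B \<in> E then subset_prob p S A else 0))"
proof -
  define g where "g C = (if sum x C \<in> E then subset_prob p U C else 0)" for C
  have "(\<Sum>C\<in>Pow U. g C) = (\<Sum>(B, A)\<in>Pow (U - S) \<times> Pow S. g (A \<union> B))"
    by (rule sum.reindex_bij_witness[where i="\<lambda>(B, A). A \<union> B" and j="\<lambda>C. (C - S, C \<inter> S)"])
      (use assms in \<open>auto simp: Int_Diff_Un\<close>)
  also have "\<dots> = (\<Sum>B\<in>Pow (U - S). \<Sum>A\<in>Pow S. g (A \<union> B))"
    by (rule sum.cartesian_product[symmetric])
  also have "\<dots> = (\<Sum>B\<in>Pow (U - S). subset_prob p (U - S) B *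
      (\<Sum>A\<in>Pow S. if sum x A + sum x B \<in> E then subset_prob p S A else 0))"
  proof (intro sum.cong refl)
    fix B assume B: "B \<in> Pow (U - S)"
    have "g (A \<union> B) = subset_prob p (U - S) B * (if sum x A + sum x B \<in> E then subset_prob p S A else 0)"
      if A: "A \<in> Pow S" for A
    proof -
      have "finite A" "finite B" "A \<inter> B = {}"
        using A B assms by (auto intro: finite_subset)
      then have "sum x (A \<union> B) = sum x A + sum x B"
        by (rule sum.union_disjoint)
      then show ?thesis
        using subset_prob_union[OF assms, of A B] A B unfolding g_def by simp
    qed
    then show "(\<Sum>A\<in>Pow S. g (A \<union> B)) = subset_prob p (U - S) B *
        (\<Sum>A\<in>Pow S. if sum x A + sum x B \<in> E then subset_prob p S A else 0)"
      by (simp add: sum_distrib_left)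
  qed
  finally show ?thesis unfolding g_def .
qed

lemma pmf_Pi_bernoulli_indicator:
  assumes "finite U" "A \<subseteq> U" "0 \<le> p" "p \<le> 1"
  shows "pmf (Pi_pmf U False (\<lambda>_. bernoulli_pmf p)) (\<lambda>i. i \<in> A) = subset_prob p U A"
proof -
  have "pmf (Pi_pmf U False (\<lambda>_. bernoulli_pmf p)) (\<lambda>i. i \<in> A)
      = (\<Prod>i\<in>U. pmf (bernoulli_pmf p) (i \<in> A))"
    using assms by (subst pmf_Pi) auto
  also have "\<dots> = (\<Prod>i\<in>U. if i \<in> A then p else 1 - p)"
    using assms by (intro prod.cong refl) auto
  also have "\<dots> = (\<Prod>i\<in>A. p) * (\<Prod>i\<in>U - A. 1 - p)"
    using assms by (simp add: prod.If_cases Int_absorb1 Diff_eq)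
  also have "\<dots> = subset_prob p U A"
    using assms by (simp add: subset_prob_def card_Diff_subset finite_subset)
  finally show ?thesis .
qed

lemma set_Pi_pmf_False_subset:
  assumes "finite U"
  shows "set_pmf (Pi_pmf U False P) \<subseteq> (\<lambda>A i. i \<in> A) ` Pow U"
proof
  fix b assume "b \<in> set_pmf (Pi_pmf U False P)"
  then have "\<forall>i. i \<notin> U \<longrightarrow> \<not> b i"
    using set_Pi_pmf_subset[OF assms, of False P] by blast
  then have "b = (\<lambda>i. i \<in> {i \<in> U. b i})" by auto
  then show "b \<in> (\<lambda>A i. i \<in> A) ` Pow U" by blast
qed

lemma prob_bern_sum:
  assumes "0 \<le> p" "p \<le> 1"
  shows "measure_pmf.prob (bern_sum p n x) E
       = (\<Sum>A\<in>Pow {..<n}. if sum x A \<in> E then subset_prob p {..<n} A else 0)"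
proof -
  define U where "U = {..<n}"
  define M where "M = Pi_pmf U False (\<lambda>_. bernoulli_pmf p)"
  define f where "f b = (\<Sum>i<n. (if b i then 1 else 0) * x i)" for b :: "nat \<Rightarrow> bool"
  define ind where "ind A = (\<lambda>i. i \<in> A)" for A :: "nat set"
  have "finite U" unfolding U_def by simp
  have f_ind: "f (ind A) = sum x A" if "A \<subseteq> U" for A
  proof -
    have "f (ind A) = (\<Sum>i\<in>U. if i \<in> A then x i else 0)"
      unfolding f_def ind_def U_def by (intro sum.cong) auto
    also have "\<dots> = sum x (U \<inter> A)"
      using \<open>finite U\<close> by (simp add: sum.inter_restrict)
    finally show ?thesis using that by (simp add: Int_absorb1)
  qed
  have "set_pmf M \<subseteq> ind ` Pow U"
    unfolding M_def ind_def using \<open>finite U\<close> by (rule set_Pi_pmf_False_subset)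
  then have restrict: "f -` E \<inter> set_pmf M = (f -` E \<inter> ind ` Pow U) \<inter> set_pmf M"
    by blast
  have preimage: "f -` E \<inter> ind ` Pow U = ind ` {A \<in> Pow U. sum x A \<in> E}"
  proof (intro equalityI subsetI)
    fix b assume "b \<in> f -` E \<inter> ind ` Pow U"
    then obtain A where "A \<subseteq> U" "b = ind A" "f b \<in> E" by blast
    then show "b \<in> ind ` {A \<in> Pow U. sum x A \<in> E}" using f_ind by auto
  next
    fix b assume "b \<in> ind ` {A \<in> Pow U. sum x A \<in> E}"
    then show "b \<in> f -` E \<inter> ind ` Pow U" using f_ind by auto
  qed
  have "inj_on ind (Pow U)" unfolding ind_def inj_on_def by (auto simp: fun_eq_iff)
  have "measure_pmf.prob M (f -` E) = measure_pmf.prob M (f -` E \<inter> set_pmf M)"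
    by (rule measure_Int_set_pmf[symmetric])
  also have "\<dots> = measure_pmf.prob M (ind ` {A \<in> Pow U. sum x A \<in> E})"
    by (simp only: restrict measure_Int_set_pmf preimage)
  also have "\<dots> = sum (pmf M) (ind ` {A \<in> Pow U. sum x A \<in> E})"
    using \<open>finite U\<close> by (intro measure_measure_pmf_finite) simp
  also have "\<dots> = (\<Sum>A\<in>{A \<in> Pow U. sum x A \<in> E}. pmf M (ind A))"
    by (rule sum.reindex_cong[OF inj_on_subset[OF \<open>inj_on ind (Pow U)\<close>]]) auto
  also have "\<dots> = (\<Sum>A\<in>{A \<in> Pow U. sum x A \<in> E}. subset_prob p U A)"
    using \<open>finite U\<close> assms unfolding M_def ind_def
    by (intro sum.cong refl pmf_Pi_bernoulli_indicator) auto
  also have "\<dots> = (\<Sum>A\<in>Pow U. if sum x A \<in> E then subset_prob p U A else 0)"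
    using \<open>finite U\<close> by (intro sum.inter_filter) simp
  finally show ?thesis
    unfolding bern_sum_def M_def f_def U_def by simp
qed

definition ball_prob :: "real \<Rightarrow> (nat \<Rightarrow> real) \<Rightarrow> real \<Rightarrow> nat set \<Rightarrow> real \<Rightarrow> real" where
  "ball_prob p x t S u = (\<Sum>A\<in>Pow S. if \<bar>u + sum x A\<bar> \<le> t then subset_prob p S A else 0)"

lemma ball_prob_uminus: "ball_prob p x t S u = ball_prob p (\<lambda>i. - x i) t S (- u)"
proof -
  have "\<bar>u + sum x A\<bar> = \<bar>- u + sum (\<lambda>i. - x i) A\<bar>" for A
    by (simp add: sum_negf abs_minus_commute)
  then show ?thesis unfolding ball_prob_def by simp
qed

lemma ball_prob_le_chain_hits:
  assumes "0 \<le> p" "p \<le> 1" "finite S" "\<And>k. k \<le> card S \<Longrightarrow> binom_prob (card S) p k \<le> F"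
  shows "ball_prob p x t S u \<le> F * (chain_hits x t S u / fact (card S))"
proof -
  define m where "m = card S"
  define v where "v A = (if \<bar>u + sum x A\<bar> \<le> t then fact (card A) * fact (m - card A) / fact m else 0 :: real)" for A
  have "subset_prob p S A = binom_prob m p (card A) * (fact (card A) * fact (m - card A) / fact m)"
    if "A \<in> Pow S" for A
  proof -
    have "card A \<le> m" unfolding m_def using that assms(3) by (simp add: card_mono)
    then have "real (m choose card A) * (fact (card A) * fact (m - card A)) = fact m"
      by (simp add: binomial_fact field_simps)
    then show ?thesis
      unfolding subset_prob_def binom_prob_def m_def[symmetric] by (simp add: field_simps)
  qed
  then have "ball_prob p x t S u = (\<Sum>A\<in>Pow S. binom_prob m p (card A) * v A)"
    unfolding ball_prob_def v_def by (intro sum.cong refl) simp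
  also have "\<dots> \<le> (\<Sum>A\<in>Pow S. F * v A)"
  proof (intro sum_mono mult_right_mono)
    fix A assume "A \<in> Pow S"
    then show "binom_prob m p (card A) \<le> F"
      unfolding m_def using assms(3) by (intro assms(4)) (simp add: card_mono)
  qed (simp add: v_def)
  also have "\<dots> = F * (chain_hits x t S u / fact m)"
    unfolding chain_hits_def v_def m_def sum_divide_distrib sum_distrib_left by (intro sum.cong refl) simp
  finally show ?thesis unfolding m_def .
qed

lemma ball_prob_le_same_sign:
  assumes "0 < p" "p \<le> 1/2" "0 < r" "0 \<le> t" "finite S"
    and "(\<forall>i\<in>S. r \<le> x i) \<or> (\<forall>i\<in>S. r \<le> - x i)"
  shows "ball_prob p x t S u \<le> (2 * t / r + 1) / sqrt ((real (card S) + 1) * p)"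
proof -
  define F where "F = 1 / sqrt ((real (card S) + 1) * p)"
  have "binom_prob (card S) p k \<le> sqrt (1 / ((real (card S) + 1) * p))" for k
    by (rule real_le_rsqrt[OF binom_prob_sq_le[OF assms(1,2)]])
  then have F: "binom_prob (card S) p k \<le> F" for k
    unfolding F_def by (simp add: real_sqrt_divide)
  have "0 \<le> F" unfolding F_def using assms(1) by simp
  have "ball_prob p y t S v \<le> F * (2 * t / r + 1)" if "\<forall>i\<in>S. r \<le> y i" for y v
  proof -
    have "chain_hits y t S v / fact (card S) \<le> hit_bound r t v"
      using chain_hits_le[OF assms(3,4,5) that] by (simp add: divide_le_eq mult.commute)
    also have "\<dots> \<le> 2 * t / r + 1" by (rule hit_bound_le[OF assms(3,4)])
    finally have "F * (chain_hits y t S v / fact (card S)) \<le> F * (2 * t / r + 1)"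
      using \<open>0 \<le> F\<close> by (rule mult_left_mono)
    moreover have "ball_prob p y t S v \<le> F * (chain_hits y t S v / fact (card S))"
      using assms(1,2,5) F by (intro ball_prob_le_chain_hits) auto
    ultimately show ?thesis by linarith
  qed
  note same_sign_bound = this
  from assms(6) show ?thesis
  proof
    assume "\<forall>i\<in>S. r \<le> - x i"
    then show ?thesis
      using same_sign_bound[of "\<lambda>i. - x i" "- u"] unfolding ball_prob_uminus[of p x t S u] F_def by simp
  qed (use same_sign_bound in \<open>simp add: F_def\<close>)
qed

lemma prob_bern_sum_le_ball_prob:
  assumes "0 \<le> p" "p \<le> 1" "S \<subseteq> {..<n}" "\<And>u. ball_prob p x t S u \<le> b"
  shows "measure_pmf.prob (bern_sum p n x) {y. \<bar>y - c\<bar> \<le> t} \<le> b"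
proof -
  define U where "U = {..<n}"
  have "finite U" unfolding U_def by simp
  have "measure_pmf.prob (bern_sum p n x) {y. \<bar>y - c\<bar> \<le> t}
      = (\<Sum>B\<in>Pow (U - S). subset_prob p (U - S) B * ball_prob p x t S (sum x B - c))"
    unfolding prob_bern_sum[OF assms(1,2)] sum_subset_prob_split[OF \<open>finite U\<close> assms(3)[folded U_def]]
      U_def[symmetric] ball_prob_def
    by (intro sum.cong refl arg_cong2[where f = "(*)"]) (simp_all add: algebra_simps)
  also have "\<dots> \<le> (\<Sum>B\<in>Pow (U - S). subset_prob p (U - S) B * b)"
    using assms by (intro sum_mono mult_left_mono subset_prob_nonneg) auto
  also have "\<dots> = b"
    using \<open>finite U\<close> by (simp add: sum_distrib_right[symmetric] sum_subset_prob)
  finally show ?thesis .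
qed

section \<open>Incompressible vectors and the threshold\<close>

lemma Incomp_many_large_coords:
  assumes "x \<in> Incomp n \<delta> \<nu>" "0 < n" "0 < \<nu>"
  shows "\<delta> * n < real (card {i \<in> {..<n}. \<nu> / sqrt n \<le> \<bar>x i\<bar>})"
proof (rule ccontr)
  define r where "r = \<nu> / sqrt n"
  define G where "G = {i \<in> {..<n}. r \<le> \<bar>x i\<bar>}"
  define y where "y i = (if i \<in> G then x i else 0)" for i
  assume "\<not> ?thesis"
  then have "real (card G) \<le> \<delta> * n" unfolding G_def r_def by simp
  moreover have "{i \<in> {..<n}. y i \<noteq> 0} \<subseteq> G" unfolding y_def by auto
  then have "card {i \<in> {..<n}. y i \<noteq> 0} \<le> card G" by (intro card_mono) (auto simp: G_def)
  ultimately have sparse: "real (card {i \<in> {..<n}. y i \<noteq> 0}) \<le> \<delta> * real n" by linarith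
  have "(\<Sum>i<n. (x i - y i)\<^sup>2) \<le> (\<Sum>i<n. r\<^sup>2)"
  proof (intro sum_mono)
    fix i assume "i \<in> {..<n}"
    show "(x i - y i)\<^sup>2 \<le> r\<^sup>2"
    proof (cases "i \<in> G")
      case False
      then have "\<bar>x i\<bar> \<le> r" using \<open>i \<in> {..<n}\<close> unfolding G_def by simp
      then have "\<bar>x i\<bar>\<^sup>2 \<le> r\<^sup>2" by (rule power_mono) simp
      then show ?thesis using False unfolding y_def by simp
    qed (simp add: y_def)
  qed
  also have "\<dots> = \<nu>\<^sup>2" unfolding r_def using assms(2) by (simp add: power_divide)
  finally have "sqrt (\<Sum>i<n. (x i - y i)\<^sup>2) \<le> sqrt (\<nu>\<^sup>2)"
    by (rule real_sqrt_le_mono)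
  then have "sqrt (\<Sum>i<n. (x i - y i)\<^sup>2) \<le> \<nu>"
    using assms(3) by simp
  moreover have "\<forall>i\<ge>n. y i = 0" "x \<in> unit_sphere n"
    using assms(1) unfolding y_def G_def Incomp_def by auto
  ultimately have "x \<in> Comp n \<delta> \<nu>" using sparse unfolding Comp_def by blast
  then show False using assms(1) unfolding Incomp_def by simp
qed

lemma Incomp_same_sign_coords:
  assumes "x \<in> Incomp n \<delta> \<nu>" "0 < n" "0 < \<nu>"
  obtains S where "S \<subseteq> {..<n}" "\<delta> * n / 2 < real (card S)"
    "(\<forall>i\<in>S. \<nu> / sqrt n \<le> x i) \<or> (\<forall>i\<in>S. \<nu> / sqrt n \<le> - x i)"
proof -
  define r where "r = \<nu> / sqrt n"
  define P where "P = {i \<in> {..<n}. r \<le> x i}"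
  define N where "N = {i \<in> {..<n}. r \<le> - x i}"
  have "0 < r" unfolding r_def using assms by simp
  then have "{i \<in> {..<n}. r \<le> \<bar>x i\<bar>} = P \<union> N" "P \<inter> N = {}"
    unfolding P_def N_def by auto
  then have "card {i \<in> {..<n}. r \<le> \<bar>x i\<bar>} = card P + card N"
    unfolding P_def N_def by (simp add: card_Un_disjoint)
  then have "\<delta> * n < real (card P) + real (card N)"
    using Incomp_many_large_coords[OF assms] unfolding r_def by simp
  then have "\<delta> * n / 2 < real (card P) \<or> \<delta> * n / 2 < real (card N)"
    by linarith
  then show ?thesis
    using that[of P] that[of N] unfolding P_def N_def r_def by auto
qed

lemma prob_bern_sum_Incomp_le:
  assumes "0 < p" "p \<le> 1/2" "0 < \<delta>" "0 < \<nu>" "0 < n" "x \<in> Incomp n \<delta> \<nu>" "0 \<le> t"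
  shows "measure_pmf.prob (bern_sum p n x) {y. \<bar>y - c\<bar> \<le> t}
           \<le> sqrt (2 / (p * \<delta>)) * (2 * t / \<nu> + 1 / sqrt n)"
proof -
  define r where "r = \<nu> / sqrt n"
  obtain S where S: "S \<subseteq> {..<n}" "\<delta> * n / 2 < real (card S)"
    "(\<forall>i\<in>S. r \<le> x i) \<or> (\<forall>i\<in>S. r \<le> - x i)"
    using Incomp_same_sign_coords[OF assms(6,5,4)] unfolding r_def by blast
  have "finite S" using S(1) by (rule finite_subset) simp
  have "0 < r" unfolding r_def using assms by simp
  have "1 / sqrt ((real (card S) + 1) * p) \<le> sqrt (2 / (p * \<delta>)) / sqrt n"
  proof -
    have "\<delta> * n * p / 2 \<le> (real (card S) + 1) * p"
      using S(2) assms(1) by (simp add: mult_right_mono)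
    moreover have "0 < \<delta> * n * p / 2" using assms by simp
    ultimately have "1 / ((real (card S) + 1) * p) \<le> 1 / (\<delta> * n * p / 2)"
      by (intro divide_left_mono) auto
    also have "\<dots> = 2 / (p * \<delta>) / n" by (simp add: field_simps)
    finally have "1 / ((real (card S) + 1) * p) \<le> 2 / (p * \<delta>) / n" .
    then have "sqrt (1 / ((real (card S) + 1) * p)) \<le> sqrt (2 / (p * \<delta>) / n)"
      by (rule real_sqrt_le_mono)
    then show ?thesis by (simp add: real_sqrt_divide real_sqrt_mult)
  qed
  then have "(2 * t / r + 1) / sqrt ((real (card S) + 1) * p)
      \<le> (2 * t / r + 1) * (sqrt (2 / (p * \<delta>)) / sqrt n)"
    using \<open>0 < r\<close> assms(7) by (simp add: divide_inverse mult_left_mono)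
  also have "\<dots> = sqrt (2 / (p * \<delta>)) * (2 * t / \<nu> + 1 / sqrt n)"
    unfolding r_def using assms by (simp add: field_simps)
  finally have "(2 * t / r + 1) / sqrt ((real (card S) + 1) * p)
      \<le> sqrt (2 / (p * \<delta>)) * (2 * t / \<nu> + 1 / sqrt n)" .
  moreover have "ball_prob p x t S u \<le> (2 * t / r + 1) / sqrt ((real (card S) + 1) * p)" for u
    using assms(1,2) \<open>0 < r\<close> assms(7) \<open>finite S\<close> S(3) by (rule ball_prob_le_same_sign)
  ultimately show ?thesis
    using assms(1,2) S(1) by (intro prob_bern_sum_le_ball_prob) (auto intro: order_trans)
qed

lemma levy_conc_le:
  assumes "\<And>c. measure_pmf.prob M {y. \<bar>y - c\<bar> \<le> t} \<le> b"
  shows "levy_conc M t \<le> b"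
  unfolding levy_conc_def by (rule cSUP_least) (auto intro: assms)

lemma pmf_le_levy_conc:
  assumes "0 \<le> t"
  shows "pmf M c \<le> levy_conc M t"
proof -
  have "pmf M c = measure_pmf.prob M {c}" by (simp add: measure_pmf_single)
  also have "\<dots> \<le> measure_pmf.prob M {y. \<bar>y - c\<bar> \<le> t}"
    using assms by (intro measure_pmf.finite_measure_mono) auto
  also have "\<dots> \<le> levy_conc M t"
    unfolding levy_conc_def
    by (rule cSUP_upper) (auto intro!: bdd_aboveI[of _ 1] measure_pmf.prob_le_1)
  finally show ?thesis .
qed

lemma Sup_levy_threshold_le:
  fixes M :: "real pmf"
  assumes "0 < L" "\<And>t. \<tau> < t \<Longrightarrow> t \<le> 1 \<Longrightarrow> levy_conc M t \<le> L * t"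
  shows "Sup {t. 0 < t \<and> t \<le> 1 \<and> levy_conc M t > L * t} \<le> \<tau>"
proof (rule cSup_least)
  \<comment> \<open>The supremum of an empty set of reals is unspecified; an atom of M puts small t in the set.\<close>
  obtain c where "c \<in> set_pmf M" using set_pmf_not_empty by fast
  define t where "t = min 1 (pmf M c / (2 * L))"
  have "0 < pmf M c" using \<open>c \<in> set_pmf M\<close> by (simp add: pmf_positive)
  then have "0 < t" "t \<le> 1" "L * t < pmf M c"
    using assms(1) unfolding t_def by (auto simp: min_def field_simps)
  moreover have "pmf M c \<le> levy_conc M t"
    using \<open>0 < t\<close> by (intro pmf_le_levy_conc) simp
  ultimately have "t \<in> {t. 0 < t \<and> t \<le> 1 \<and> levy_conc M t > L * t}" by simp
  then show "{t. 0 < t \<and> t \<le> 1 \<and> levy_conc M t > L * t} \<noteq> {}" by blast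
next
  fix t assume "t \<in> {t. 0 < t \<and> t \<le> 1 \<and> levy_conc M t > L * t}"
  then show "t \<le> \<tau>" using assms(2)[of t] by force
qed

lemma levy_conc_bern_sum_Incomp_le:
  assumes "0 < p" "p \<le> 1/2" "0 < \<delta>" "0 < \<nu>" "0 < n" "x \<in> Incomp n \<delta> \<nu>"
    and "1 / sqrt n < t" "sqrt (2 / (p * \<delta>)) * (2 / \<nu> + 1) \<le> L"
  shows "levy_conc (bern_sum p n x) t \<le> L * t"
proof (rule levy_conc_le)
  fix c
  have "0 \<le> 1 / sqrt n" by simp
  then have "0 < t" using assms(7) by linarith
  have "measure_pmf.prob (bern_sum p n x) {y. \<bar>y - c\<bar> \<le> t} \<le> sqrt (2 / (p * \<delta>)) * (2 * t / \<nu> + 1 / sqrt n)"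
    using assms(1-6) \<open>0 < t\<close> by (intro prob_bern_sum_Incomp_le) auto
  also have "\<dots> \<le> sqrt (2 / (p * \<delta>)) * (2 * t / \<nu> + t)"
    using assms(1,3,7) by (intro mult_left_mono) auto
  also have "\<dots> = sqrt (2 / (p * \<delta>)) * (2 / \<nu> + 1) * t"
    by (simp add: algebra_simps)
  also have "\<dots> \<le> L * t"
    using assms(8) \<open>0 < t\<close> by (intro mult_right_mono) auto
  finally show "measure_pmf.prob (bern_sum p n x) {y. \<bar>y - c\<bar> \<le> t} \<le> L * t" .
qed

theorem lemma5p1:
  fixes p \<delta> \<nu> :: real
  assumes "0 < p" "p \<le> 1/2" "0 < \<delta>" "\<delta> \<le> 1" "0 < \<nu>" "\<nu> \<le> 1"
  shows "\<exists>K > 0. \<exists>L\<^sub>1 \<ge> 1. \<forall>n::nat. \<forall>L::real. \<forall>x.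
           n \<ge> 2 \<longrightarrow> L \<ge> L\<^sub>1 \<longrightarrow> x \<in> Incomp n \<delta> \<nu> \<longrightarrow>
           threshold p n x L \<le> K / sqrt (real n)"
proof -
  define L\<^sub>1 where "L\<^sub>1 = sqrt (2 / (p * \<delta>)) * (2 / \<nu> + 1) + 1"
  have "1 \<le> L\<^sub>1" unfolding L\<^sub>1_def using assms by simp
  moreover have "threshold p n x L \<le> 1 / sqrt n" if "2 \<le> n" "L\<^sub>1 \<le> L" "x \<in> Incomp n \<delta> \<nu>" for n L x
    unfolding threshold_def
  proof (rule Sup_levy_threshold_le)
    show "0 < L" using \<open>1 \<le> L\<^sub>1\<close> that(2) by linarith
  next
    fix t assume "1 / sqrt n < t"
    then show "levy_conc (bern_sum p n x) t \<le> L * t"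
      using assms that unfolding L\<^sub>1_def by (intro levy_conc_bern_sum_Incomp_le) auto
  qed
  ultimately show ?thesis by (intro exI[of _ 1]) auto
qed

end
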